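(* Let $X$ be an $n$-dimensional real normed space and let $Y \subseteq X$ be a $k$-dimensional subspace, where $1 \leq k \leq n-1$. Suppose that there exists a minimal Chalmers–Metcalf operator $T$ for $Y$ supported on $l$ pairs. Then $\dim \mathcal{P}_{\min}(X, Y) \leq k(n-k) - l + 1$.
   Context: A projection onto $Y$ is a linear $P:X\to Y$ with $P|_Y=\mathrm{id}_Y$; $\lambda(Y,X)$ is the infimum of the operator norms of projections and $\mathcal{P}_{\min}(X,Y)$ the set of projections of norm $\lambda(Y,X)$; $\dim\mathcal{P}_{\min}(X,Y)$ is the affine dimension of this convex subset of $\mathcal{L}(X,X)$. For $x\in X$, $f\in X^*$, $x\otimes f$ is the operator $z\mapsto f(z)x$. A Chalmers–Metcalf operator for $Y$ is an operator $T=\sum_{i=1}^{l}\alpha_i x_i\otimes f_i:X\to X$ with $(x_i,f_i)\in\mathrm{ext}\,B_X\times\mathrm{ext}\,B_{X^*}$ (extreme points of the unit balls of $X$ and $X^*$), $\alpha_i>0$, $\sum_i\alpha_i=1$, $T(Y)\subseteq Y$, and $f_i(P_0(x_i))=\|P_0\|=\lambda(Y,X)$ for all $i$ and some fixed minimal projection $P_0$; it is supported on the $l$ pairs $(x_i,f_i)$. It is minimal if no proper subset of the pairs $(x_i,f_i)$ yields a Chalmers–Metcalf operator for $Y$ with any choice of weights. *)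

theory Defs
  imports "HOL-Analysis.Analysis"
begin

text \<open>In finite dimension every linear operator is bounded, so L(X,X) = 'a \<Rightarrow>L 'a,
  and the norm of the blinfun type is the operator norm.\<close>
definition projections :: "'a::real_normed_vector set \<Rightarrow> ('a \<Rightarrow>\<^sub>L 'a) set" where
  "projections Y = {P. (\<forall>x. blinfun_apply P x \<in> Y) \<and> (\<forall>y\<in>Y. blinfun_apply P y = y)}"

definition proj_const :: "'a::real_normed_vector set \<Rightarrow> real" where
  "proj_const Y = Inf (norm ` projections Y)"

definition min_projections :: "'a::real_normed_vector set \<Rightarrow> ('a \<Rightarrow>\<^sub>L 'a) set" where
  "min_projections Y = {P \<in> projections Y. norm P = proj_const Y}"

definition affine_dimension :: "'b::real_vector set \<Rightarrow> int" where
  "affine_dimension S = (if S = {} then -1 else int (dim {p - q | p q. p \<in> S \<and> q \<in> S}))"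

definition CM_sum :: "('a::real_normed_vector \<times> ('a \<Rightarrow>\<^sub>L real)) set
    \<Rightarrow> ('a \<times> ('a \<Rightarrow>\<^sub>L real) \<Rightarrow> real) \<Rightarrow> 'a \<Rightarrow> 'a" where
  "CM_sum S \<alpha> = (\<lambda>z. \<Sum>p\<in>S. \<alpha> p *\<^sub>R (blinfun_apply (snd p) z *\<^sub>R fst p))"

definition is_CM_op :: "'a::real_normed_vector set \<Rightarrow> ('a \<Rightarrow> 'a)
    \<Rightarrow> ('a \<times> ('a \<Rightarrow>\<^sub>L real)) set \<Rightarrow> ('a \<times> ('a \<Rightarrow>\<^sub>L real) \<Rightarrow> real) \<Rightarrow> bool" where
  "is_CM_op Y T S \<alpha> \<longleftrightarrow>
     finite S \<and> S \<noteq> {} \<and>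
     (\<forall>p\<in>S. fst p extreme_point_of cball 0 1 \<and> snd p extreme_point_of cball 0 1 \<and> \<alpha> p > 0) \<and>
     sum \<alpha> S = 1 \<and>
     T = CM_sum S \<alpha> \<and>
     (\<forall>y\<in>Y. T y \<in> Y) \<and>
     (\<exists>P0\<in>min_projections Y. \<forall>p\<in>S. blinfun_apply (snd p) (blinfun_apply P0 (fst p)) = proj_const Y)"

definition minimal_CM_support :: "'a::real_normed_vector set \<Rightarrow> ('a \<times> ('a \<Rightarrow>\<^sub>L real)) set \<Rightarrow> bool" where
  "minimal_CM_support Y S \<longleftrightarrow> (\<forall>S' \<beta> T'. S' \<subset> S \<longrightarrow> \<not> is_CM_op Y T' S' \<beta>)"

end

theory Submission
  imports Defs
begin

(* Differences of projections onto Y are the operators D with range in Y that vanish on Y;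
   they form a space W of dimension k (n - k). For a pair p = (x, f) let psi_p (D) = f (D x)
   (pair_eval p D below). For T = sum of c_p x_p \<otimes> f_p, the sum of c_p psi_p (D) is the trace
   of D T, and it vanishes for all D in W exactly when T maps Y into Y.

   For a Chalmers-Metcalf operator with weights alpha and minimal projection P0, this trace
   condition applied to P - P0 says that the alpha-average of the numbers psi_p (P) <= norm P
   is lambda(Y, X) for every minimal projection P. Hence psi_p (P) = lambda(Y, X) on the whole
   support, and differences of minimal projections lie in the common kernel in W of the psi_p,
   p in S - {p0}. A nontrivial linear relation among these l - 1 functionals on W could be added
   to the weights until one of them vanishes, giving a Chalmers-Metcalf operator on fewer pairs.
   By minimality they are independent on W, so the kernel has dimension at most
   k (n - k) - (l - 1). *)

section \<open>Linear functionals on finite-dimensional normed spaces\<close>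

lemma abs_scaleR_infdist_le:
  fixes b w :: "'a::real_normed_vector"
  assumes "subspace V" "w \<in> V"
  shows "\<bar>c\<bar> * infdist b V \<le> norm (c *\<^sub>R b + w)"
proof (cases "c = 0")
  case False
  have "- (w /\<^sub>R c) \<in> V" using assms by (simp add: subspace_neg subspace_scale)
  then have "infdist b V \<le> norm (b + w /\<^sub>R c)"
    using infdist_le[of "- (w /\<^sub>R c)" V b] by (simp add: dist_norm)
  then have "\<bar>c\<bar> * infdist b V \<le> norm (c *\<^sub>R (b + w /\<^sub>R c))"
    by (simp add: mult_left_mono)
  also have "c *\<^sub>R (b + w /\<^sub>R c) = c *\<^sub>R b + w" using False by (simp add: scaleR_add_right)
  finally show ?thesis .
qed simp

lemma closed_span_finite:
  fixes B :: "'a::real_normed_vector set"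
  assumes "finite B"
  shows "closed (span B)"
  using assms
proof (induction B rule: finite_induct)
  case (insert b B)
  show ?case
  proof (cases "b \<in> span B")
    case True
    then show ?thesis using insert by (simp add: span_redundant)
  next
    case False
    define d where "d = infdist b (span B)"
    have "d > 0"
      unfolding d_def using infdist_pos_not_in_closed[OF insert.IH _ False] span_zero by blast
    show ?thesis unfolding closed_sequential_limits
    proof (intro allI impI, elim conjE)
      fix x l assume x: "\<forall>n. x n \<in> span (insert b B)" and "x \<longlonglongrightarrow> l"
      then have "\<forall>n. \<exists>c. x n - c *\<^sub>R b \<in> span B" by (simp add: span_insert)
      then obtain c where c: "\<And>n. x n - c n *\<^sub>R b \<in> span B" by metis
      have "Cauchy c"
      proof (rule metric_CauchyI)
        fix e :: real assume "e > 0"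
        from \<open>x \<longlonglongrightarrow> l\<close> have "Cauchy x" by (rule LIMSEQ_imp_Cauchy)
        then obtain M where M: "\<And>m n. m \<ge> M \<Longrightarrow> n \<ge> M \<Longrightarrow> dist (x m) (x n) < e * d"
          using \<open>e > 0\<close> \<open>d > 0\<close> by (meson metric_CauchyD mult_pos_pos)
        have "dist (c m) (c n) < e" if "m \<ge> M" "n \<ge> M" for m n
        proof -
          have "(x m - c m *\<^sub>R b) - (x n - c n *\<^sub>R b) \<in> span B"
            using c by (simp add: span_diff)
          then have "\<bar>c m - c n\<bar> * d \<le> norm ((c m - c n) *\<^sub>R b + ((x m - c m *\<^sub>R b) - (x n - c n *\<^sub>R b)))"
            unfolding d_def by (rule abs_scaleR_infdist_le[OF subspace_span])
          also have "\<dots> = dist (x m) (x n)" by (simp add: dist_norm algebra_simps)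
          also have "\<dots> < e * d" using M[OF that] .
          finally show ?thesis using \<open>d > 0\<close> by (simp add: dist_real_def mult_less_cancel_right_pos)
        qed
        then show "\<exists>M. \<forall>m\<ge>M. \<forall>n\<ge>M. dist (c m) (c n) < e" by blast
      qed
      then obtain c0 where "c \<longlonglongrightarrow> c0" using Cauchy_convergent_iff convergent_def by blast
      with \<open>x \<longlonglongrightarrow> l\<close> have "(\<lambda>n. x n - c n *\<^sub>R b) \<longlonglongrightarrow> l - c0 *\<^sub>R b"
        by (intro tendsto_intros)
      then have "l - c0 *\<^sub>R b \<in> span B"
        using closed_sequentially[OF insert.IH, of "\<lambda>n. x n - c n *\<^sub>R b"] c by blast
      then show "l \<in> span (insert b B)" by (auto simp: span_insert)
    qed
  qed
qed simp

lemma bounded_linear_functional_finite_span: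
  fixes g :: "'a::real_normed_vector \<Rightarrow> real" and B :: "'a set"
  assumes "finite B" "span B = UNIV" "linear g"
  shows "bounded_linear g"
proof (cases "\<forall>x. g x = 0")
  case True
  then have "g = (\<lambda>x. 0)" by auto
  then show ?thesis by simp
next
  case False
  then obtain u where "g u \<noteq> 0" by auto
  define u' where "u' = u /\<^sub>R g u"
  have "g u' = 1"
    unfolding u'_def using \<open>g u \<noteq> 0\<close> by (simp add: linear_scale[OF assms(3)])
  define K where "K = {x. g x = 0}"
  have "subspace K" unfolding K_def by (rule linear_subspace_kernel[OF assms(3)])
  obtain BK where BK: "BK \<subseteq> K" "independent BK" "K \<subseteq> span BK"
    by (rule basis_exists[of K])
  have "finite BK" using independent_span_bound[OF assms(1) BK(2)] assms(2) by simp
  moreover have "span BK = K" using span_subspace[OF BK(1,3) \<open>subspace K\<close>] .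
  ultimately have "closed K" using closed_span_finite by metis
  define d where "d = infdist u' K"
  have "K \<noteq> {}" "u' \<notin> K"
    using subspace_0[OF \<open>subspace K\<close>] \<open>g u' = 1\<close> unfolding K_def by auto
  then have "d > 0" unfolding d_def by (rule infdist_pos_not_in_closed[OF \<open>closed K\<close>])
  show ?thesis
  proof (rule bounded_linear_intro[where K = "1/d"])
    show "g (x + y) = g x + g y" "g (r *\<^sub>R x) = r *\<^sub>R g x" for x y r
      by (simp_all add: linear_add[OF assms(3)] linear_scale[OF assms(3)])
    fix x
    have "x - g x *\<^sub>R u' \<in> K"
      unfolding K_def by (simp add: linear_diff[OF assms(3)] linear_scale[OF assms(3)] \<open>g u' = 1\<close>)
    then have "\<bar>g x\<bar> * d \<le> norm (g x *\<^sub>R u' + (x - g x *\<^sub>R u'))"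
      unfolding d_def by (rule abs_scaleR_infdist_le[OF \<open>subspace K\<close>])
    then show "norm (g x) \<le> norm x * (1/d)" using \<open>d > 0\<close> by (simp add: field_simps)
  qed
qed

section \<open>Independent functionals on a subspace\<close>

lemma dim_subset_finite_span:
  assumes "S \<subseteq> T" "T \<subseteq> span F" "finite F"
  shows "dim S \<le> dim T"
proof -
  obtain B where B: "B \<subseteq> T" "independent B" "T \<subseteq> span B" "card B = dim T"
    by (rule basis_exists[of T])
  have "finite B" using independent_span_bound[OF assms(3) B(2)] B(1) assms(2) by auto
  then show ?thesis using dim_le_card[of S B] B assms(1) by auto
qed

definition functionals_independent_on ::
    "'e::real_vector set \<Rightarrow> ('i \<Rightarrow> 'e \<Rightarrow> real) \<Rightarrow> 'i set \<Rightarrow> bool" where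
  "functionals_independent_on W \<psi> I \<longleftrightarrow>
     (\<forall>c. (\<forall>w\<in>W. (\<Sum>i\<in>I. c i * \<psi> i w) = 0) \<longrightarrow> (\<forall>i\<in>I. c i = 0))"

definition biorthogonal_on ::
    "'e::real_vector set \<Rightarrow> ('i \<Rightarrow> 'e \<Rightarrow> real) \<Rightarrow> 'i set \<Rightarrow> ('i \<Rightarrow> 'e) \<Rightarrow> bool" where
  "biorthogonal_on W \<psi> I d \<longleftrightarrow>
     (\<forall>i\<in>I. d i \<in> W) \<and> (\<forall>i\<in>I. \<forall>j\<in>I. \<psi> j (d i) = (if i = j then 1 else 0))"

lemma functionals_independent_onD:
  "functionals_independent_on W \<psi> I \<Longrightarrow> (\<And>w. w \<in> W \<Longrightarrow> (\<Sum>i\<in>I. c i * \<psi> i w) = 0) \<Longrightarrow>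
    i \<in> I \<Longrightarrow> c i = 0"
  unfolding functionals_independent_on_def by blast

lemma functionals_independent_on_subset:
  assumes "functionals_independent_on W \<psi> I" "J \<subseteq> I" "finite I"
  shows "functionals_independent_on W \<psi> J"
  unfolding functionals_independent_on_def
proof (intro allI impI)
  fix c assume J: "\<forall>w\<in>W. (\<Sum>i\<in>J. c i * \<psi> i w) = 0"
  have "(\<Sum>i\<in>I. (if i \<in> J then c i else 0) * \<psi> i w) = (\<Sum>i\<in>J. c i * \<psi> i w)" for w
    by (rule sum.mono_neutral_cong_right) (use assms(2,3) in auto)
  then show "\<forall>i\<in>J. c i = 0"
    using functionals_independent_onD[OF assms(1), of "\<lambda>i. if i \<in> J then c i else 0"] J assms(2)
    by (metis subsetD)
qed

lemma biorthogonal_onD: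
  "biorthogonal_on W \<psi> I d \<Longrightarrow> i \<in> I \<Longrightarrow> j \<in> I \<Longrightarrow> \<psi> j (d i) = (if i = j then 1 else 0)"
  unfolding biorthogonal_on_def by blast

lemma biorthogonal_on_subset:
  "biorthogonal_on W \<psi> I d \<Longrightarrow> J \<subseteq> I \<Longrightarrow> biorthogonal_on W \<psi> J d"
  unfolding biorthogonal_on_def by blast

lemma biorthogonal_on_insert:
  assumes "biorthogonal_on W \<psi> I d" "subspace W" "\<forall>i\<in>insert j I. linear (\<psi> i)" "j \<notin> I"
    and "e \<in> W" "\<psi> j e = 1" "\<forall>i\<in>I. \<psi> i e = 0"
  shows "biorthogonal_on W \<psi> (insert j I) (\<lambda>i. if i = j then e else d i - \<psi> j (d i) *\<^sub>R e)"
  unfolding biorthogonal_on_def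
proof (intro conjI ballI)
  fix i assume "i \<in> insert j I"
  then show "(if i = j then e else d i - \<psi> j (d i) *\<^sub>R e) \<in> W"
    using assms(1,2,5) unfolding biorthogonal_on_def by (auto intro: subspace_diff subspace_scale)
next
  fix i j' assume i: "i \<in> insert j I" and j': "j' \<in> insert j I"
  show "\<psi> j' (if i = j then e else d i - \<psi> j (d i) *\<^sub>R e) = (if i = j' then 1 else 0)"
  proof (cases "i = j")
    case True
    then show ?thesis using assms(4,6,7) j' by auto
  next
    case False
    then have "i \<in> I" using i by simp
    have lin: "linear (\<psi> j')" using assms(3) j' by blast
    have "\<psi> j' (d i - \<psi> j (d i) *\<^sub>R e) = \<psi> j' (d i) - \<psi> j (d i) * \<psi> j' e"
      by (simp add: linear_diff[OF lin] linear_scale[OF lin])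
    moreover have "\<psi> j' e = (if j' = j then 1 else 0)" using assms(4,6,7) j' by auto
    moreover have "j' \<noteq> j \<Longrightarrow> \<psi> j' (d i) = (if i = j' then 1 else 0)"
      using biorthogonal_onD[OF assms(1) \<open>i \<in> I\<close>] j' by simp
    ultimately show ?thesis using False by auto
  qed
qed

lemma common_kernel_functional_expansion:
  assumes "subspace W" "finite I" "biorthogonal_on W \<psi> I d" "\<forall>i\<in>I. linear (\<psi> i)" "linear \<phi>"
    and "\<And>u. u \<in> W \<Longrightarrow> \<forall>i\<in>I. \<psi> i u = 0 \<Longrightarrow> \<phi> u = 0" and "w \<in> W"
  shows "\<phi> w = (\<Sum>i\<in>I. \<psi> i w * \<phi> (d i))"
proof -
  define u where "u = w - (\<Sum>i\<in>I. \<psi> i w *\<^sub>R d i)"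
  have "u \<in> W"
    unfolding u_def using assms(1,3,7) unfolding biorthogonal_on_def
    by (auto intro!: subspace_diff subspace_sum subspace_scale)
  have u: "f u = f w - (\<Sum>i\<in>I. \<psi> i w * f (d i))" if "linear f" for f
    unfolding u_def by (simp add: linear_diff[OF that] linear_sum[OF that] linear_scale[OF that])
  have "\<psi> j u = 0" if "j \<in> I" for j
  proof -
    have "(\<Sum>i\<in>I. \<psi> i w * \<psi> j (d i)) = (\<Sum>i\<in>I. if i = j then \<psi> i w else 0)"
      using assms(3) that unfolding biorthogonal_on_def by (intro sum.cong) auto
    then show ?thesis using u[of "\<psi> j"] assms(2,4) that by simp
  qed
  then have "\<phi> u = 0" using assms(6) \<open>u \<in> W\<close> by blast
  then show ?thesis using u[OF assms(5)] by simp
qed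

lemma biorthogonal_on_exists:
  assumes "finite I" "subspace W" "\<forall>i\<in>I. linear (\<psi> i)" "functionals_independent_on W \<psi> I"
  shows "\<exists>d. biorthogonal_on W \<psi> I d"
  using assms(1,3,4)
proof (induction I rule: finite_induct)
  case empty
  then show ?case by (simp add: biorthogonal_on_def)
next
  case (insert j I)
  then obtain d where d: "biorthogonal_on W \<psi> I d"
    using functionals_independent_on_subset[of W \<psi> "insert j I" I] by blast
  \<comment> \<open>if \<psi> j vanished on the common kernel of the \<psi> i, it would be a combination of them\<close>
  have "\<exists>u\<in>W. (\<forall>i\<in>I. \<psi> i u = 0) \<and> \<psi> j u \<noteq> 0"
  proof (rule ccontr)
    assume vanish: "\<not> ?thesis"
    have \<psi>j: "\<psi> j w = (\<Sum>i\<in>I. \<psi> i w * \<psi> j (d i))" if "w \<in> W" for w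
      by (rule common_kernel_functional_expansion[OF assms(2) insert.hyps(1) d])
        (use insert.prems(1) vanish that in auto)
    define c where "c i = (if i = j then 1 else - \<psi> j (d i))" for i
    have "(\<Sum>i\<in>insert j I. c i * \<psi> i w) = 0" if "w \<in> W" for w
    proof -
      have "(\<Sum>i\<in>I. c i * \<psi> i w) = - (\<Sum>i\<in>I. \<psi> i w * \<psi> j (d i))"
        using insert.hyps(2) by (auto simp: c_def sum_negf[symmetric] intro!: sum.cong)
      then show ?thesis using insert.hyps \<psi>j[OF that] by (simp add: c_def)
    qed
    then have "c j = 0"
      using functionals_independent_onD[OF insert.prems(2)] by blast
    then show False by (simp add: c_def)
  qed
  then obtain u where u: "u \<in> W" "\<forall>i\<in>I. \<psi> i u = 0" "\<psi> j u \<noteq> 0" by blast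
  define e where "e = u /\<^sub>R \<psi> j u"
  have "e \<in> W" using u(1) assms(2) by (simp add: e_def subspace_scale)
  moreover have "\<psi> i e = \<psi> i u / \<psi> j u" if "i \<in> insert j I" for i
  proof -
    have lin: "linear (\<psi> i)" using insert.prems(1) that by blast
    show ?thesis by (simp add: e_def linear_scale[OF lin] divide_inverse_commute)
  qed
  ultimately have "e \<in> W" "\<psi> j e = 1" "\<forall>i\<in>I. \<psi> i e = 0" using u by auto
  then show ?case
    using biorthogonal_on_insert[OF d assms(2) insert.prems(1) insert.hyps(2)] by blast
qed

lemma independent_union_biorthogonal:
  assumes "finite I" "biorthogonal_on W \<psi> I d" "\<forall>i\<in>I. linear (\<psi> i)"
    and "independent B" "finite B" "\<forall>b\<in>B. \<forall>i\<in>I. \<psi> i b = 0"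
  shows "independent (B \<union> d ` I) \<and> card (B \<union> d ` I) = card B + card I"
  using assms(1-3,6)
proof (induction I rule: finite_induct)
  case empty
  then show ?case using assms(4) by simp
next
  case (insert j I)
  have "biorthogonal_on W \<psi> I d"
    using insert.prems(1) by (rule biorthogonal_on_subset) auto
  then have IH: "independent (B \<union> d ` I)" "card (B \<union> d ` I) = card B + card I"
    using insert.IH insert.prems(2,3) by simp_all
  have "linear (\<psi> j)" using insert.prems(2) by simp
  have vanish: "\<psi> j v = 0" if "v \<in> span (B \<union> d ` I)" for v
  proof (rule linear_eq_0_on_span[OF \<open>linear (\<psi> j)\<close> _ that])
    show "\<psi> j b = 0" if b: "b \<in> B \<union> d ` I" for b
    proof (cases "b \<in> B")
      case True
      then show ?thesis using insert.prems(3) by simp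
    next
      case False
      then obtain i where "i \<in> I" "b = d i" using b by blast
      have "i \<in> insert j I" "i \<noteq> j" using \<open>i \<in> I\<close> insert.hyps(2) by auto
      have "\<psi> j (d i) = (if i = j then 1 else 0)"
        by (rule biorthogonal_onD[OF insert.prems(1) \<open>i \<in> insert j I\<close> insertI1])
      then show ?thesis using \<open>b = d i\<close> \<open>i \<noteq> j\<close> by simp
    qed
  qed
  have "\<psi> j (d j) = 1" using biorthogonal_onD[OF insert.prems(1)] by simp
  have notin: "d j \<notin> span (B \<union> d ` I)"
  proof
    assume "d j \<in> span (B \<union> d ` I)"
    from vanish[OF this] \<open>\<psi> j (d j) = 1\<close> show False by simp
  qed
  have eq: "B \<union> d ` insert j I = insert (d j) (B \<union> d ` I)" by simp
  have "d j \<notin> B \<union> d ` I" using notin span_base[of "d j" "B \<union> d ` I"] by blast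
  then have "card (insert (d j) (B \<union> d ` I)) = Suc (card (B \<union> d ` I))"
    using assms(5) insert.hyps(1) by (intro card_insert_disjoint) auto
  also have "\<dots> = card B + card (insert j I)" using IH(2) insert.hyps(1,2) by simp
  finally show ?case unfolding eq using independent_insertI[OF notin IH(1)] by blast
qed

lemma dim_common_kernel_le:
  assumes "finite I" "subspace W" "W \<subseteq> span F" "finite F"
    and "\<forall>i\<in>I. linear (\<psi> i)" "functionals_independent_on W \<psi> I"
  shows "dim {w\<in>W. \<forall>i\<in>I. \<psi> i w = 0} + card I \<le> dim W"
proof -
  obtain d where d: "biorthogonal_on W \<psi> I d"
    using biorthogonal_on_exists[OF assms(1,2,5,6)] by blast
  define K where "K = {w\<in>W. \<forall>i\<in>I. \<psi> i w = 0}"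
  obtain B where B: "B \<subseteq> K" "independent B" "K \<subseteq> span B" "card B = dim K"
    by (rule basis_exists[of K])
  have "B \<subseteq> span F" using B(1) assms(3) unfolding K_def by auto
  then have "finite B" using independent_span_bound[OF assms(4) B(2)] by blast
  moreover have "\<forall>b\<in>B. \<forall>i\<in>I. \<psi> i b = 0" using B(1) unfolding K_def by blast
  ultimately have "independent (B \<union> d ` I)" "card (B \<union> d ` I) = dim K + card I"
    using independent_union_biorthogonal[OF assms(1) d assms(5) B(2)] B(4) by simp_all
  moreover have "B \<union> d ` I \<subseteq> W" using B(1) d unfolding K_def biorthogonal_on_def by blast
  then have "dim (B \<union> d ` I) \<le> dim W" by (rule dim_subset_finite_span[OF _ assms(3,4)])
  ultimately show ?thesis unfolding K_def by (simp add: dim_eq_card_independent)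
qed

section \<open>Directions of the affine space of projections\<close>

definition rank_one ::
    "('a::real_normed_vector \<Rightarrow> real) \<Rightarrow> 'b::real_normed_vector \<Rightarrow> 'a \<Rightarrow>\<^sub>L 'b" where
  "rank_one g y = Blinfun (\<lambda>x. g x *\<^sub>R y)"

lemma rank_one_apply:
  assumes "bounded_linear g"
  shows "blinfun_apply (rank_one g y) x = g x *\<^sub>R y"
  unfolding rank_one_def
  using bounded_linear_Blinfun_apply[OF bounded_linear_compose[OF bounded_linear_scaleR_left[of y] assms]]
  by simp

lemma linear_rank_one:
  "bounded_linear g \<Longrightarrow> linear (rank_one g)"
  by (rule linearI; rule blinfun_eqI)
    (simp_all add: rank_one_apply blinfun.add_left blinfun.scaleR_left scaleR_add_right)

definition proj_directions :: "'a::real_normed_vector set \<Rightarrow> ('a \<Rightarrow>\<^sub>L 'a) set" where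
  "proj_directions Y = {D. (\<forall>x. blinfun_apply D x \<in> Y) \<and> (\<forall>y\<in>Y. blinfun_apply D y = 0)}"

definition pair_eval ::
    "'a::real_normed_vector \<times> ('a \<Rightarrow>\<^sub>L real) \<Rightarrow> ('a \<Rightarrow>\<^sub>L 'a) \<Rightarrow> real" where
  "pair_eval p D = blinfun_apply (snd p) (blinfun_apply D (fst p))"

lemma subspace_proj_directions: "subspace Y \<Longrightarrow> subspace (proj_directions Y)"
  unfolding subspace_def proj_directions_def
  by (auto simp: blinfun.add_left blinfun.scaleR_left)

lemma projections_diff_mem_proj_directions:
  "subspace Y \<Longrightarrow> P \<in> projections Y \<Longrightarrow> Q \<in> projections Y \<Longrightarrow> P - Q \<in> proj_directions Y"
  unfolding projections_def proj_directions_def by (auto simp: blinfun.diff_left subspace_diff)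

lemma linear_pair_eval: "linear (pair_eval p)"
  by (rule linearI)
    (simp_all add: pair_eval_def blinfun.add_left blinfun.add_right blinfun.scaleR_left blinfun.scaleR_right)

lemma pair_eval_le_norm:
  assumes "norm (fst p) \<le> 1" "norm (snd p) \<le> 1"
  shows "pair_eval p P \<le> norm P"
proof -
  have "pair_eval p P \<le> norm (snd p) * norm (blinfun_apply P (fst p))"
    unfolding pair_eval_def using norm_blinfun[of "snd p" "blinfun_apply P (fst p)"] by simp
  also have "\<dots> \<le> 1 * (norm P * norm (fst p))"
    by (intro mult_mono assms norm_blinfun) auto
  also have "\<dots> \<le> norm P" using assms(1) by (simp add: mult_left_le)
  finally show ?thesis .
qed

lemma CM_sum_apply: "CM_sum S c z = (\<Sum>p\<in>S. (c p * blinfun_apply (snd p) z) *\<^sub>R fst p)"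
  unfolding CM_sum_def by simp

locale adapted_basis =
  fixes Y :: "'a::real_normed_vector set" and BY BX :: "'a set"
  assumes finite_BX: "finite BX" and independent_BX: "independent BX" and span_BX: "span BX = UNIV"
    and BY_subset: "BY \<subseteq> BX" and span_BY: "span BY = Y"
begin

definition coord :: "'a \<Rightarrow> 'a \<Rightarrow> real" where
  "coord z x = representation BX x z"

lemma linear_coord: "linear (coord z)"
proof (rule linearI)
  show "coord z (x + y) = coord z x + coord z y" "coord z (r *\<^sub>R x) = r *\<^sub>R coord z x" for x y r
    unfolding coord_def using span_BX
    by (simp_all add: representation_add[OF independent_BX] representation_scale[OF independent_BX])
qed

lemma bounded_linear_coord: "bounded_linear (coord z)"
  by (rule bounded_linear_functional_finite_span[OF finite_BX span_BX linear_coord])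

lemma sum_coord: "(\<Sum>z\<in>BX. coord z x *\<^sub>R z) = x"
  unfolding coord_def using sum_representation_eq[OF independent_BX _ finite_BX order_refl] span_BX
  by simp

lemma coord_eq_0: "z \<notin> BY \<Longrightarrow> y \<in> Y \<Longrightarrow> coord z y = 0"
  unfolding coord_def using representation_extend[OF independent_BX _ BY_subset] span_BY
    representation_ne_zero by metis

lemma proj_direction_expansion:
  assumes "D \<in> proj_directions Y"
  shows "blinfun_apply D x = (\<Sum>z\<in>BX - BY. coord z x *\<^sub>R blinfun_apply D z)"
proof -
  have "blinfun_apply D x = (\<Sum>z\<in>BX. coord z x *\<^sub>R blinfun_apply D z)"
    by (subst (1) sum_coord[symmetric, of x]) (simp add: blinfun.sum_right blinfun.scaleR_right)
  also have "\<dots> = (\<Sum>z\<in>BX - BY. coord z x *\<^sub>R blinfun_apply D z)"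
    using assms span_BY span_base[of _ BY] unfolding proj_directions_def
    by (intro sum.mono_neutral_right[OF finite_BX]) auto
  finally show ?thesis .
qed

lemma proj_directions_subset_span:
  "proj_directions Y \<subseteq> span ((\<lambda>(z, a). rank_one (coord z) a) ` ((BX - BY) \<times> BY))"
    (is "_ \<subseteq> span ?F")
proof
  fix D assume D: "D \<in> proj_directions Y"
  have "D = (\<Sum>z\<in>BX - BY. rank_one (coord z) (blinfun_apply D z))"
    by (rule blinfun_eqI, subst proj_direction_expansion[OF D])
      (simp add: blinfun.sum_left rank_one_apply bounded_linear_coord)
  also have "\<dots> \<in> span ?F"
  proof (intro span_sum)
    fix z assume z: "z \<in> BX - BY"
    have "blinfun_apply D z \<in> span BY" using D span_BY unfolding proj_directions_def by auto
    then have "rank_one (coord z) (blinfun_apply D z) \<in> span (rank_one (coord z) ` BY)"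
      using linear_span_image[OF linear_rank_one[OF bounded_linear_coord]] by blast
    also have "\<dots> \<subseteq> span ?F" using z by (intro span_mono) auto
    finally show "rank_one (coord z) (blinfun_apply D z) \<in> span ?F" .
  qed
  finally show "D \<in> span ?F" .
qed

text \<open>The left-hand side is the trace of D \<circ> CM_sum S c.\<close>
lemma pair_eval_sum_eq_coord_sum:
  assumes "D \<in> proj_directions Y"
  shows "(\<Sum>p\<in>S. c p * pair_eval p D) = (\<Sum>z\<in>BX - BY. coord z (CM_sum S c (blinfun_apply D z)))"
proof -
  have "(\<Sum>p\<in>S. c p * pair_eval p D)
      = (\<Sum>p\<in>S. \<Sum>z\<in>BX - BY. coord z (fst p) * (c p * blinfun_apply (snd p) (blinfun_apply D z)))"
    unfolding pair_eval_def
    by (subst proj_direction_expansion[OF assms])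
      (simp add: blinfun.sum_right blinfun.scaleR_right sum_distrib_left mult_ac)
  also have "\<dots> = (\<Sum>z\<in>BX - BY. \<Sum>p\<in>S. coord z (fst p) * (c p * blinfun_apply (snd p) (blinfun_apply D z)))"
    by (rule sum.swap)
  also have "\<dots> = (\<Sum>z\<in>BX - BY. coord z (CM_sum S c (blinfun_apply D z)))"
    unfolding CM_sum_apply linear_sum[OF linear_coord]
    by (simp add: linear_scale[OF linear_coord] mult_ac)
  finally show ?thesis .
qed

lemma invariant_imp_pair_eval_sum_eq_0:
  assumes "\<forall>y\<in>Y. CM_sum S c y \<in> Y" "D \<in> proj_directions Y"
  shows "(\<Sum>p\<in>S. c p * pair_eval p D) = 0"
  unfolding pair_eval_sum_eq_coord_sum[OF assms(2)]
  using assms coord_eq_0 unfolding proj_directions_def by (intro sum.neutral) auto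

lemma pair_eval_sum_eq_0_imp_invariant:
  assumes "subspace Y" "\<forall>D\<in>proj_directions Y. (\<Sum>p\<in>S. c p * pair_eval p D) = 0" "y \<in> Y"
  shows "CM_sum S c y \<in> Y"
proof (rule ccontr)
  assume "CM_sum S c y \<notin> Y"
  have "\<exists>z\<in>BX - BY. coord z (CM_sum S c y) \<noteq> 0"
  proof (rule ccontr)
    assume "\<not> ?thesis"
    then have "CM_sum S c y = (\<Sum>z\<in>BY. coord z (CM_sum S c y) *\<^sub>R z)"
      using sum_coord[of "CM_sum S c y"] BY_subset
      by (simp add: sum.mono_neutral_left[OF finite_BX BY_subset])
    also have "\<dots> \<in> Y" using span_BY by (auto intro: span_sum span_scale span_base)
    finally show False using \<open>CM_sum S c y \<notin> Y\<close> by contradiction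
  qed
  then obtain z where z: "z \<in> BX - BY" "coord z (CM_sum S c y) \<noteq> 0" by blast
  have D: "rank_one (coord z) y \<in> proj_directions Y"
    using assms(1,3) z(1) coord_eq_0 unfolding proj_directions_def
    by (simp add: rank_one_apply bounded_linear_coord subspace_scale)
  have "(\<Sum>p\<in>S. c p * pair_eval p (rank_one (coord z) y)) = coord z (CM_sum S c y)"
    unfolding pair_eval_def CM_sum_apply linear_sum[OF linear_coord]
    by (simp add: rank_one_apply bounded_linear_coord blinfun.scaleR_right
        linear_scale[OF linear_coord] mult_ac)
  then show False using assms(2) D z(2) by simp
qed

end

lemma adapted_basis_exists:
  fixes Y :: "'a::real_normed_vector set"
  assumes "\<exists>B. finite B \<and> span B = (UNIV :: 'a set)" "subspace Y"
  obtains BY BX where "adapted_basis Y BY BX" "card BY = dim Y" "card BX = dim (UNIV :: 'a set)"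
proof -
  obtain B where B: "finite B" "span B = (UNIV :: 'a set)" using assms(1) by blast
  obtain BY where BY: "BY \<subseteq> Y" "independent BY" "Y \<subseteq> span BY" "card BY = dim Y"
    by (rule basis_exists[of Y])
  obtain BX where BX: "BY \<subseteq> BX" "independent BX" "UNIV \<subseteq> span BX"
    using maximal_independent_subset_extend[OF subset_UNIV BY(2)] by metis
  have "finite BX" using independent_span_bound[OF B(1) BX(2)] B(2) by simp
  moreover have "span BY = Y" using span_subspace[OF BY(1,3) assms(2)] .
  moreover have "card BX = dim (UNIV :: 'a set)" using basis_card_eq_dim[of BX UNIV] BX by simp
  ultimately show ?thesis
    using that[of BY BX] BX BY(4) unfolding adapted_basis_def by auto
qed

lemma proj_directions_finite_span:
  fixes Y :: "'a::real_normed_vector set"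
  assumes "\<exists>B. finite B \<and> span B = (UNIV :: 'a set)" "subspace Y"
  obtains F where "finite F" "card F \<le> dim Y * (dim (UNIV :: 'a set) - dim Y)"
    "proj_directions Y \<subseteq> span F"
proof -
  obtain BY BX where basis: "adapted_basis Y BY BX"
    and card: "card BY = dim Y" "card BX = dim (UNIV :: 'a set)"
    using adapted_basis_exists[OF assms] by blast
  interpret adapted_basis Y BY BX by (rule basis)
  define F where "F = (\<lambda>(z, a). rank_one (coord z) a) ` ((BX - BY) \<times> BY)"
  have "finite BY" using finite_BX BY_subset finite_subset by blast
  then have "card F \<le> card (BX - BY) * card BY"
    unfolding F_def using finite_BX card_image_le card_cartesian_product by (metis finite_Diff finite_SigmaI)
  also have "\<dots> = dim Y * (dim (UNIV :: 'a set) - dim Y)"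
    using card card_Diff_subset[OF \<open>finite BY\<close> BY_subset] by simp
  finally show ?thesis
    using that[of F] proj_directions_subset_span finite_BX \<open>finite BY\<close> unfolding F_def by auto
qed

lemma CM_sum_invariant_iff:
  fixes Y :: "'a::real_normed_vector set"
  assumes "\<exists>B. finite B \<and> span B = (UNIV :: 'a set)" "subspace Y"
  shows "(\<forall>y\<in>Y. CM_sum S c y \<in> Y) \<longleftrightarrow> (\<forall>D\<in>proj_directions Y. (\<Sum>p\<in>S. c p * pair_eval p D) = 0)"
proof -
  obtain BY BX where "adapted_basis Y BY BX"
    using adapted_basis_exists[OF assms] by blast
  then interpret adapted_basis Y BY BX .
  show ?thesis
    using invariant_imp_pair_eval_sum_eq_0 pair_eval_sum_eq_0_imp_invariant[OF assms(2)] by blast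
qed

section \<open>Chalmers--Metcalf operators\<close>

lemma is_CM_op_pair_norms:
  assumes "is_CM_op Y T S \<alpha>" "p \<in> S"
  shows "norm (fst p) \<le> 1" "norm (snd p) \<le> 1"
  using assms unfolding is_CM_op_def extreme_point_of_def by auto

lemma min_projection_pair_eval:
  fixes Y :: "'a::real_normed_vector set"
  assumes fin: "\<exists>B. finite B \<and> span B = (UNIV :: 'a set)" and "subspace Y"
    and CM: "is_CM_op Y T S \<alpha>" and P: "P \<in> min_projections Y" and "p \<in> S"
  shows "pair_eval p P = proj_const Y"
proof -
  from CM obtain P0 where P0: "P0 \<in> min_projections Y" "\<forall>q\<in>S. pair_eval q P0 = proj_const Y"
    unfolding is_CM_op_def pair_eval_def by blast
  have "finite S" "\<forall>q\<in>S. \<alpha> q > 0" and inv: "\<forall>y\<in>Y. CM_sum S \<alpha> y \<in> Y"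
    using CM unfolding is_CM_op_def by auto
  have "P - P0 \<in> proj_directions Y"
    using projections_diff_mem_proj_directions \<open>subspace Y\<close> P P0(1) unfolding min_projections_def by blast
  then have "(\<Sum>q\<in>S. \<alpha> q * pair_eval q (P - P0)) = 0"
    using inv CM_sum_invariant_iff[OF fin \<open>subspace Y\<close>] by blast
  then have "(\<Sum>q\<in>S. \<alpha> q * (proj_const Y - pair_eval q P)) = 0"
    using P0(2) by (simp add: linear_diff[OF linear_pair_eval] algebra_simps sum_subtractf)
  moreover have "\<alpha> q * (proj_const Y - pair_eval q P) \<ge> 0" if "q \<in> S" for q
  proof -
    have "pair_eval q P \<le> proj_const Y"
      using pair_eval_le_norm[OF is_CM_op_pair_norms[OF CM that], of P] P
      unfolding min_projections_def by simp
    moreover have "\<alpha> q > 0" using \<open>\<forall>q\<in>S. \<alpha> q > 0\<close> that by blast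
    ultimately show ?thesis by simp
  qed
  ultimately have "\<alpha> p * (proj_const Y - pair_eval p P) = 0"
    using sum_nonneg_eq_0_iff[OF \<open>finite S\<close>, of "\<lambda>q. \<alpha> q * (proj_const Y - pair_eval q P)"] \<open>p \<in> S\<close>
    by blast
  moreover have "\<alpha> p > 0" using \<open>\<forall>q\<in>S. \<alpha> q > 0\<close> \<open>p \<in> S\<close> by blast
  ultimately show ?thesis by simp
qed

lemma exists_scaling_to_boundary:
  fixes \<alpha> \<beta> :: "'i \<Rightarrow> real"
  assumes "finite S" "\<forall>p\<in>S. \<alpha> p > 0" "sum \<beta> S = 0" "\<exists>p\<in>S. \<beta> p \<noteq> 0"
  shows "\<exists>t. (\<forall>p\<in>S. t * \<beta> p \<le> \<alpha> p) \<and> (\<exists>p\<in>S. t * \<beta> p = \<alpha> p)"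
proof -
  define Pos where "Pos = {p\<in>S. \<beta> p > 0}"
  have "Pos \<noteq> {}"
  proof
    assume "Pos = {}"
    then have "\<forall>p\<in>S. - \<beta> p \<ge> 0" unfolding Pos_def by force
    moreover have "sum (\<lambda>p. - \<beta> p) S = 0" using assms(3) by (simp add: sum_negf)
    ultimately show False
      using sum_nonneg_eq_0_iff[OF assms(1), of "\<lambda>p. - \<beta> p"] assms(4) by auto
  qed
  have "finite Pos" unfolding Pos_def using assms(1) by simp
  define t where "t = Min ((\<lambda>p. \<alpha> p / \<beta> p) ` Pos)"
  have "t \<in> (\<lambda>p. \<alpha> p / \<beta> p) ` Pos"
    unfolding t_def using \<open>finite Pos\<close> \<open>Pos \<noteq> {}\<close> by (intro Min_in) auto
  then obtain pm where pm: "pm \<in> Pos" "t = \<alpha> pm / \<beta> pm" by blast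
  have "t > 0" using pm assms(2) unfolding Pos_def by simp
  have "t * \<beta> p \<le> \<alpha> p" if "p \<in> S" for p
  proof (cases "\<beta> p > 0")
    case True
    then have "p \<in> Pos" unfolding Pos_def using that by simp
    then have "t \<le> \<alpha> p / \<beta> p" unfolding t_def using \<open>finite Pos\<close> by (intro Min_le) auto
    then show ?thesis using True by (simp add: pos_le_divide_eq)
  next
    case False
    then have "t * \<beta> p \<le> 0" using \<open>t > 0\<close> by (simp add: mult_nonneg_nonpos)
    then show ?thesis using assms(2) that by fastforce
  qed
  moreover have "t * \<beta> pm = \<alpha> pm" using pm unfolding Pos_def by simp
  ultimately show ?thesis using pm(1) unfolding Pos_def by blast
qed

lemma is_CM_op_positive_part:
  assumes CM: "is_CM_op Y T S \<alpha>"
    and "\<forall>p\<in>S. \<gamma> p \<ge> 0" "sum \<gamma> S = 1" "\<forall>y\<in>Y. CM_sum S \<gamma> y \<in> Y"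
  shows "is_CM_op Y (CM_sum {p\<in>S. \<gamma> p > 0} \<gamma>) {p\<in>S. \<gamma> p > 0} \<gamma>"
    (is "is_CM_op Y (CM_sum ?S' \<gamma>) ?S' \<gamma>")
proof -
  have "finite S" using CM unfolding is_CM_op_def by blast
  have "?S' \<subseteq> S" by blast
  have zero: "\<gamma> p = 0" if "p \<in> S - ?S'" for p
    using that assms(2) by force
  have "sum \<gamma> ?S' = sum \<gamma> S"
    by (rule sum.mono_neutral_left[OF \<open>finite S\<close> \<open>?S' \<subseteq> S\<close>]) (use zero in blast)
  then have "sum \<gamma> ?S' = 1" using assms(3) by simp
  have "CM_sum ?S' \<gamma> z = CM_sum S \<gamma> z" for z
    unfolding CM_sum_def
  proof (rule sum.mono_neutral_left[OF \<open>finite S\<close> \<open>?S' \<subseteq> S\<close>], intro ballI)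
    fix p assume "p \<in> S - ?S'"
    then have "\<gamma> p = 0" by (rule zero)
    then show "\<gamma> p *\<^sub>R (blinfun_apply (snd p) z *\<^sub>R fst p) = 0" by simp
  qed
  then have "\<forall>y\<in>Y. CM_sum ?S' \<gamma> y \<in> Y" using assms(4) by simp
  moreover from CM obtain P0 where "P0 \<in> min_projections Y"
    "\<forall>p\<in>S. blinfun_apply (snd p) (blinfun_apply P0 (fst p)) = proj_const Y"
    unfolding is_CM_op_def by blast
  moreover have "\<forall>p\<in>S. fst p extreme_point_of cball 0 1 \<and> snd p extreme_point_of cball 0 1"
    using CM unfolding is_CM_op_def by blast
  ultimately show ?thesis
    using \<open>finite S\<close> \<open>sum \<gamma> ?S' = 1\<close> unfolding is_CM_op_def by fastforce
qed

lemma CM_support_not_minimal: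
  fixes Y :: "'a::real_normed_vector set"
  assumes fin: "\<exists>B. finite B \<and> span B = (UNIV :: 'a set)" and "subspace Y"
    and CM: "is_CM_op Y T S \<alpha>" and "sum \<beta> S = 0" "\<exists>p\<in>S. \<beta> p \<noteq> 0"
    and \<beta>: "\<forall>D\<in>proj_directions Y. (\<Sum>p\<in>S. \<beta> p * pair_eval p D) = 0"
  shows "\<not> minimal_CM_support Y S"
proof -
  have "finite S" and pos: "\<forall>p\<in>S. \<alpha> p > 0" and "sum \<alpha> S = 1" and inv: "\<forall>y\<in>Y. CM_sum S \<alpha> y \<in> Y"
    using CM unfolding is_CM_op_def by auto
  obtain t pm where t: "\<forall>p\<in>S. t * \<beta> p \<le> \<alpha> p" and pm: "pm \<in> S" "t * \<beta> pm = \<alpha> pm"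
    using exists_scaling_to_boundary[OF \<open>finite S\<close> pos assms(4,5)] by blast
  define \<gamma> where "\<gamma> p = \<alpha> p - t * \<beta> p" for p
  have "sum \<gamma> S = 1" using \<open>sum \<alpha> S = 1\<close> assms(4)
    by (simp add: \<gamma>_def sum_subtractf sum_distrib_left[symmetric])
  have "(\<Sum>p\<in>S. \<gamma> p * pair_eval p D) = 0" if "D \<in> proj_directions Y" for D
    using CM_sum_invariant_iff[OF fin \<open>subspace Y\<close>, of S \<alpha>] inv \<beta> that
    by (simp add: \<gamma>_def left_diff_distrib sum_subtractf sum_distrib_left[symmetric] mult.assoc)
  then have "\<forall>y\<in>Y. CM_sum S \<gamma> y \<in> Y" using CM_sum_invariant_iff[OF fin \<open>subspace Y\<close>] by blast
  moreover have "\<forall>p\<in>S. \<gamma> p \<ge> 0" using t by (simp add: \<gamma>_def)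
  ultimately have "is_CM_op Y (CM_sum {p\<in>S. \<gamma> p > 0} \<gamma>) {p\<in>S. \<gamma> p > 0} \<gamma>"
    using is_CM_op_positive_part[OF CM] \<open>sum \<gamma> S = 1\<close> by blast
  moreover have "pm \<notin> {p\<in>S. \<gamma> p > 0}" using pm unfolding \<gamma>_def by simp
  then have "{p\<in>S. \<gamma> p > 0} \<subset> S" using pm(1) by blast
  ultimately show ?thesis unfolding minimal_CM_support_def by blast
qed

lemma minimal_CM_support_independent:
  fixes Y :: "'a::real_normed_vector set"
  assumes fin: "\<exists>B. finite B \<and> span B = (UNIV :: 'a set)" and "subspace Y"
    and CM: "is_CM_op Y T S \<alpha>" and "minimal_CM_support Y S" and "p0 \<in> S"
  shows "functionals_independent_on (proj_directions Y) pair_eval (S - {p0})"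
  unfolding functionals_independent_on_def
proof (intro allI impI ballI, rule ccontr)
  fix c q assume c: "\<forall>D\<in>proj_directions Y. (\<Sum>p\<in>S - {p0}. c p * pair_eval p D) = 0"
    and q: "q \<in> S - {p0}" "c q \<noteq> 0"
  have "finite S" and pos: "\<forall>p\<in>S. \<alpha> p > 0" and "sum \<alpha> S = 1" and inv: "\<forall>y\<in>Y. CM_sum S \<alpha> y \<in> Y"
    using CM unfolding is_CM_op_def by auto
  \<comment> \<open>extend c by 0 to p0, then subtract a multiple of \<alpha> to make the coefficients sum to 0\<close>
  define s where "s = (\<Sum>p\<in>S - {p0}. c p)"
  define \<beta> where "\<beta> p = (if p = p0 then 0 else c p) - s * \<alpha> p" for p
  have ext: "(\<Sum>p\<in>S. (if p = p0 then 0 else c p) * f p) = (\<Sum>p\<in>S - {p0}. c p * f p)" for f :: "_ \<Rightarrow> real"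
    using \<open>finite S\<close> \<open>p0 \<in> S\<close> by (auto simp: sum.remove[of S p0] intro!: sum.cong)
  have "sum \<beta> S = 0"
    using ext[of "\<lambda>_. 1"] \<open>sum \<alpha> S = 1\<close> by (simp add: \<beta>_def s_def sum_subtractf sum_distrib_left[symmetric])
  moreover have "\<exists>p\<in>S. \<beta> p \<noteq> 0"
  proof (cases "s = 0")
    case True
    then show ?thesis using q unfolding \<beta>_def by auto
  next
    case False
    then show ?thesis using pos \<open>p0 \<in> S\<close> unfolding \<beta>_def by force
  qed
  moreover have "\<forall>D\<in>proj_directions Y. (\<Sum>p\<in>S. \<beta> p * pair_eval p D) = 0"
    using ext c inv CM_sum_invariant_iff[OF fin \<open>subspace Y\<close>, of S \<alpha>]
    by (simp add: \<beta>_def left_diff_distrib sum_subtractf sum_distrib_left[symmetric] mult.assoc)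
  ultimately show False
    using CM_support_not_minimal[OF fin \<open>subspace Y\<close> CM] \<open>minimal_CM_support Y S\<close> by blast
qed

lemma affine_dimension_le_dim:
  assumes "A \<noteq> {}" "\<And>P Q. P \<in> A \<Longrightarrow> Q \<in> A \<Longrightarrow> P - Q \<in> K" "K \<subseteq> span F" "finite F"
  shows "affine_dimension A \<le> int (dim K)"
proof -
  have "{P - Q |P Q. P \<in> A \<and> Q \<in> A} \<subseteq> K" using assms(2) by blast
  then have "dim {P - Q |P Q. P \<in> A \<and> Q \<in> A} \<le> dim K" by (rule dim_subset_finite_span[OF _ assms(3,4)])
  then show ?thesis unfolding affine_dimension_def using assms(1) by simp
qed

lemma min_projections_diff_mem_common_kernel:
  fixes Y :: "'a::real_normed_vector set"
  assumes fin: "\<exists>B. finite B \<and> span B = (UNIV :: 'a set)" and "subspace Y"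
    and CM: "is_CM_op Y T S \<alpha>" and "P \<in> min_projections Y" "Q \<in> min_projections Y"
  shows "P - Q \<in> {D \<in> proj_directions Y. \<forall>p\<in>S. pair_eval p D = 0}"
proof -
  have "P - Q \<in> proj_directions Y"
    using projections_diff_mem_proj_directions[OF \<open>subspace Y\<close>] assms(4,5)
    unfolding min_projections_def by blast
  moreover have "pair_eval p (P - Q) = 0" if "p \<in> S" for p
    using min_projection_pair_eval[OF fin \<open>subspace Y\<close> CM assms(4) that]
      min_projection_pair_eval[OF fin \<open>subspace Y\<close> CM assms(5) that]
    by (simp add: linear_diff[OF linear_pair_eval])
  ultimately show ?thesis by blast
qed

theorem mainTheorem11:
  fixes Y :: "'a::real_normed_vector set"
    and T :: "'a \<Rightarrow> 'a"
    and S :: "('a \<times> ('a \<Rightarrow>\<^sub>L real)) set"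
    and \<alpha> :: "'a \<times> ('a \<Rightarrow>\<^sub>L real) \<Rightarrow> real"
    and n k l :: nat
  assumes "\<exists>B. finite B \<and> span B = (UNIV :: 'a set)"
    and "dim (UNIV :: 'a set) = n"
    and "subspace Y"
    and "dim Y = k"
    and "1 \<le> k" and "k \<le> n - 1"
    and "is_CM_op Y T S \<alpha>"
    and "minimal_CM_support Y S"
    and "card S = l"
  shows "affine_dimension (min_projections Y) \<le> int k * (int n - int k) - int l + 1"
proof -
  note fin = assms(1) and CM = assms(7)
  obtain F where F: "finite F" "card F \<le> k * (n - k)" "proj_directions Y \<subseteq> span F"
    using proj_directions_finite_span[OF fin assms(3)] assms(2,4) by metis
  obtain p0 where "p0 \<in> S" and "finite S" using CM unfolding is_CM_op_def by blast
  define K where "K = {D \<in> proj_directions Y. \<forall>p\<in>S - {p0}. pair_eval p D = 0}"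
  have "dim K + card (S - {p0}) \<le> dim (proj_directions Y)"
    unfolding K_def using \<open>finite S\<close> linear_pair_eval F(1,3)
    by (intro dim_common_kernel_le subspace_proj_directions assms(3)
        minimal_CM_support_independent[OF fin assms(3) CM assms(8) \<open>p0 \<in> S\<close>]) auto
  moreover have "dim (proj_directions Y) \<le> card F" by (rule dim_le_card[OF F(3,1)])
  moreover have "card (S - {p0}) = l - 1" "l \<ge> 1"
    using \<open>p0 \<in> S\<close> \<open>finite S\<close> assms(9) by (auto simp: card_gt_0_iff Suc_le_eq)
  ultimately have "int (dim K + (l - 1)) \<le> int (k * (n - k))" using F(2) by linarith
  moreover have "affine_dimension (min_projections Y) \<le> int (dim K)"
  proof (rule affine_dimension_le_dim[OF _ _ _ F(1)])
    show "min_projections Y \<noteq> {}" using CM unfolding is_CM_op_def by blast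
    show "P - Q \<in> K" if "P \<in> min_projections Y" "Q \<in> min_projections Y" for P Q
      using min_projections_diff_mem_common_kernel[OF fin assms(3) CM that] unfolding K_def by blast
    show "K \<subseteq> span F" using F(3) unfolding K_def by blast
  qed
  ultimately show ?thesis using \<open>l \<ge> 1\<close> assms(5,6) by (simp add: of_nat_diff)
qed

end
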